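(* For a Legendrian curve $\gamma$, \begin{equation} \lim_{\Delta s,\,\Delta t\to 0} \frac{\mathbb{X}(\gamma(s),\gamma(t),\gamma(s+\Delta s),\gamma(t+\Delta t))}{(\Delta s)^2(\Delta t)^2} =\left(\frac{|\gamma'(s)|\,|\gamma'(t)|}{\|\gamma(s)^{-1}\gamma(t)\|_{\mathcal{H}}^2}\right)^2 \end{equation} holds for $s\neq t$.
   Context: $\mathcal{H}=\mathbb{C}\times\mathbb{R}$ is the 3-dimensional Heisenberg group with coordinates $(z,u)=(x,y,u)$, group law $(z,u)\cdot(z',u')=(z+z',u+u'-\tfrac{1}{2}\Im(z\overline{z'}))$, horizontal distribution spanned by $X=\partial_x-\tfrac12 y\,\partial_u$, $Y=\partial_y+\tfrac12 x\,\partial_u$ (orthonormal, norm $|\cdot|$); a curve is Legendrian if its velocity is horizontal. The Korányi norm is $\|(x,y,u)\|_{\mathcal{H}}=\sqrt[4]{(x^2+y^2)^2+16u^2}$. For $p=(z,u)$ set $A(p)=|z|^2-4iu$, so $\|p\|_{\mathcal{H}}=|A(p)|^{1/2}$. The complex cross ratio (Korányi–Reimann) is $\mathbb{X}(p_1,p_2,p_3,p_4)=\dfrac{A(p_3^{-1}p_1)A(p_4^{-1}p_2)}{A(p_4^{-1}p_1)A(p_3^{-1}p_2)}$. *)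

theory Defs
  imports "HOL-Analysis.Analysis"
begin

type_synonym heis = "complex \<times> real"

definition heis_mult :: "heis \<Rightarrow> heis \<Rightarrow> heis" where
  "heis_mult p q = (fst p + fst q, snd p + snd q - (1/2) * Im (fst p * cnj (fst q)))"

definition heis_inv :: "heis \<Rightarrow> heis" where
  "heis_inv p = (- fst p, - snd p)"

definition koranyi :: "heis \<Rightarrow> real" where
  "koranyi p = root 4 (((Re (fst p))\<^sup>2 + (Im (fst p))\<^sup>2)\<^sup>2 + 16 * (snd p)\<^sup>2)"

definition heisA :: "heis \<Rightarrow> complex" where
  "heisA p = complex_of_real ((cmod (fst p))\<^sup>2) - 4 * \<i> * complex_of_real (snd p)"

definition cross_ratio :: "heis \<Rightarrow> heis \<Rightarrow> heis \<Rightarrow> heis \<Rightarrow> complex" where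
  "cross_ratio p1 p2 p3 p4 =
     (heisA (heis_mult (heis_inv p3) p1) * heisA (heis_mult (heis_inv p4) p2)) /
     (heisA (heis_mult (heis_inv p4) p1) * heisA (heis_mult (heis_inv p3) p2))"

text \<open>A tangent vector v = (z', u') at p = (z,u) is horizontal iff it lies in span{X,Y},
  i.e. v = a X + b Y with z' = a + i b, which means u' = (x y' - y x')/2 = Im(cnj z * z')/2.\<close>
definition horizontal :: "heis \<Rightarrow> heis \<Rightarrow> bool" where
  "horizontal p v \<longleftrightarrow> snd v = (1/2) * Im (cnj (fst p) * fst v)"

text \<open>Sub-Riemannian length |v| of a horizontal vector (X, Y orthonormal).\<close>
definition hnorm :: "heis \<Rightarrow> real" where
  "hnorm v = cmod (fst v)"

definition legendrian_C1 :: "real set \<Rightarrow> (real \<Rightarrow> heis) \<Rightarrow> (real \<Rightarrow> heis) \<Rightarrow> bool" where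
  "legendrian_C1 I g g' \<longleftrightarrow> open I \<and>
     (\<forall>\<tau>\<in>I. (g has_vector_derivative g' \<tau>) (at \<tau>)) \<and>
     continuous_on I g' \<and>
     (\<forall>\<tau>\<in>I. horizontal (g \<tau>) (g' \<tau>))"

end

theory Submission
  imports Defs
begin

text \<open>Left translation by \<open>\<gamma>(s)\<^sup>-\<^sup>1\<close> preserves the Legendrian condition and moves \<open>\<gamma>(s)\<close>
  to the origin, where the translated curve \<open>w = (z, u)\<close> satisfies \<open>u' = Im (cnj z * z') / 2\<close>.
  Since \<open>z(\<tau>) / (\<tau> - s) \<rightarrow> z'(s)\<close>, L'Hopital's rule gives \<open>u(\<tau>) / (\<tau> - s)\<^sup>2 \<rightarrow> Im (cnj z'(s) * z'(s)) / 4 = 0\<close>,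
  so \<open>A(\<gamma>(s + h)\<^sup>-\<^sup>1 \<gamma>(s)) / h\<^sup>2 \<rightarrow> \<bar>\<gamma>'(s)\<bar>\<^sup>2\<close>; likewise at \<open>t\<close>. The two remaining factors
  of the cross ratio tend to \<open>A(\<gamma>(t)\<^sup>-\<^sup>1 \<gamma>(s)) A(\<gamma>(s)\<^sup>-\<^sup>1 \<gamma>(t)) = \<parallel>\<gamma>(s)\<^sup>-\<^sup>1 \<gamma>(t)\<parallel>\<^sup>4\<close>, which is
  nonzero because \<open>\<gamma>(s) \<noteq> \<gamma>(t)\<close> (this also makes the hypothesis \<open>s \<noteq> t\<close> redundant).\<close>

lemma has_vector_derivative_iff_difference_quotient:
  "(f has_vector_derivative D) (at x within S) \<longleftrightarrow>
    ((\<lambda>y. (f y - f x) /\<^sub>R (y - x)) \<longlongrightarrow> D) (at x within S)"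
proof -
  have "norm (f y - f x - (y - x) *\<^sub>R D) / norm (y - x) = norm ((f y - f x) /\<^sub>R (y - x) - D)"
    if "y \<noteq> x" for y
  proof -
    have "(f y - f x) /\<^sub>R (y - x) - D = inverse (y - x) *\<^sub>R (f y - f x - (y - x) *\<^sub>R D)"
      using that by (simp add: scaleR_diff_right)
    then show ?thesis by (simp add: divide_inverse abs_inverse mult.commute)
  qed
  then have "((\<lambda>y. norm (f y - f x - (y - x) *\<^sub>R D) / norm (y - x)) \<longlongrightarrow> 0) (at x within S)
      \<longleftrightarrow> ((\<lambda>y. norm ((f y - f x) /\<^sub>R (y - x) - D)) \<longlongrightarrow> 0) (at x within S)"
    by (intro Lim_cong_within) auto
  then show ?thesis
    by (simp add: has_vector_derivative_def has_derivative_iff_norm bounded_linear_scaleR_left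
        tendsto_norm_zero_iff LIM_zero_iff)
qed

lemma filterlim_fst_at_within:
  assumes "\<forall>x\<in>S. fst x \<noteq> a"
  shows "filterlim fst (at a) (at (a, b) within S)"
  using assms tendsto_fst[OF tendsto_ident_at, of "(a, b)" S]
  by (auto simp: filterlim_at eventually_at_filter)

lemma filterlim_snd_at_within:
  assumes "\<forall>x\<in>S. snd x \<noteq> b"
  shows "filterlim snd (at b) (at (a, b) within S)"
  using assms tendsto_snd[OF tendsto_ident_at, of "(a, b)" S]
  by (auto simp: filterlim_at eventually_at_filter)

definition heis_dL :: "heis \<Rightarrow> heis \<Rightarrow> heis" where
  "heis_dL p v = (fst v, snd v + 1/2 * Im (cnj (fst p) * fst v))"

lemma bounded_linear_heis_dL: "bounded_linear (heis_dL p)"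
proof -
  have "linear (heis_dL p)"
    by (rule linearI) (simp_all add: heis_dL_def algebra_simps)
  then show ?thesis
    by (simp add: linear_conv_bounded_linear)
qed

lemma heis_mult_eq_add_heis_dL: "heis_mult p q = p + heis_dL p q"
  by (simp add: heis_mult_def heis_dL_def prod_eq_iff algebra_simps)

lemma heis_mult_has_vector_derivative:
  assumes "(g has_vector_derivative v) (at t)"
  shows "((\<lambda>t. heis_mult p (g t)) has_vector_derivative heis_dL p v) (at t)"
  unfolding heis_mult_eq_add_heis_dL
  using bounded_linear.has_vector_derivative[OF bounded_linear_heis_dL assms]
  by (subst add.commute) (simp add: has_vector_derivative_add_const)

lemma horizontal_heis_mult_iff:
  "horizontal (heis_mult p q) (heis_dL p v) \<longleftrightarrow> horizontal q v"
  unfolding horizontal_def heis_mult_def heis_dL_def by (simp add: algebra_simps)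

lemma legendrian_C1_heis_mult:
  assumes "legendrian_C1 I g g'"
  shows "legendrian_C1 I (\<lambda>\<tau>. heis_mult p (g \<tau>)) (\<lambda>\<tau>. heis_dL p (g' \<tau>))"
  using assms unfolding legendrian_C1_def
  by (auto simp: heis_mult_has_vector_derivative horizontal_heis_mult_iff
      intro: bounded_linear.continuous_on[OF bounded_linear_heis_dL])

lemma heis_mult_inv_self: "heis_mult (heis_inv p) p = (0, 0)"
  by (simp add: heis_mult_def heis_inv_def)

lemma heis_inv_mult_inv: "heis_inv (heis_mult (heis_inv p) q) = heis_mult (heis_inv q) p"
  by (simp add: heis_mult_def heis_inv_def algebra_simps)

lemma heis_mult_inv_eq_0_iff: "heis_mult (heis_inv p) q = (0, 0) \<longleftrightarrow> p = q"
  by (auto simp: heis_mult_def heis_inv_def prod_eq_iff)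

lemma heisA_heis_inv: "heisA (heis_inv p) = cnj (heisA p)"
  by (simp add: heisA_def heis_inv_def complex_eq_iff)

lemma heisA_eq_0_iff: "heisA p = 0 \<longleftrightarrow> p = (0, 0)"
  by (auto simp: heisA_def complex_eq_iff prod_eq_iff)

lemma Re_heisA: "Re (heisA p) = (cmod (fst p))\<^sup>2"
  and Im_heisA: "Im (heisA p) = - 4 * snd p"
  by (simp_all add: heisA_def)

lemma koranyi_pow4: "koranyi p ^ 4 = (cmod (heisA p))\<^sup>2"
  unfolding koranyi_def cmod_power2[of "heisA p"] Re_heisA Im_heisA cmod_power2[of "fst p"]
  by (simp add: real_root_pow_pos2)

lemma heisA_swap_mult_eq_koranyi_pow4:
  "heisA (heis_mult (heis_inv q) p) * heisA (heis_mult (heis_inv p) q)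
     = complex_of_real (koranyi (heis_mult (heis_inv p) q) ^ 4)"
proof -
  have "heis_mult (heis_inv q) p = heis_inv (heis_mult (heis_inv p) q)"
    by (simp add: heis_inv_mult_inv)
  then show ?thesis
    by (simp only: heisA_heis_inv koranyi_pow4 complex_norm_square mult.commute)
qed

lemma tendsto_heisA_heis_mult_inv:
  assumes "(f \<longlongrightarrow> p) F"
  shows "((\<lambda>x. heisA (heis_mult (heis_inv (f x)) q)) \<longlongrightarrow> heisA (heis_mult (heis_inv p) q)) F"
  using assms unfolding heisA_def heis_mult_def heis_inv_def by (intro tendsto_intros)

lemma cross_ratio_divide_eq:
  "cross_ratio p1 p2 p3 p4 / (a * b)
     = (heisA (heis_mult (heis_inv p3) p1) / a) * (heisA (heis_mult (heis_inv p4) p2) / b)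
       / (heisA (heis_mult (heis_inv p4) p1) * heisA (heis_mult (heis_inv p3) p2))"
  by (simp add: cross_ratio_def divide_inverse inverse_mult_distrib mult_ac)

lemma legendrian_C1_snd_deriv_div_tendsto_0:
  assumes leg: "legendrian_C1 I w w'" and "s \<in> I" and ws: "w s = (0, 0)"
  shows "((\<lambda>\<tau>. snd (w' \<tau>) / (\<tau> - s)) \<longlongrightarrow> 0) (at s)"
proof -
  from leg have "open I" and der: "(w has_vector_derivative w' s) (at s)"
    and "continuous_on I w'" and hor: "\<And>\<tau>. \<tau> \<in> I \<Longrightarrow> horizontal (w \<tau>) (w' \<tau>)"
    using \<open>s \<in> I\<close> unfolding legendrian_C1_def by auto
  have w'_lim: "(w' \<longlongrightarrow> w' s) (at s)"
    using \<open>continuous_on I w'\<close> \<open>open I\<close> \<open>s \<in> I\<close> continuous_on_eq_continuous_at isCont_def by blast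
  have dq: "((\<lambda>\<tau>. (w \<tau> - w s) /\<^sub>R (\<tau> - s)) \<longlongrightarrow> w' s) (at s)"
    using der has_vector_derivative_iff_difference_quotient by blast
  have "((\<lambda>\<tau>. Im (cnj (fst ((w \<tau> - w s) /\<^sub>R (\<tau> - s))) * fst (w' \<tau>)) / 2)
      \<longlongrightarrow> Im (cnj (fst (w' s)) * fst (w' s)) / 2) (at s)"
    by (intro tendsto_intros dq w'_lim) simp
  then have "((\<lambda>\<tau>. Im (cnj (fst ((w \<tau> - w s) /\<^sub>R (\<tau> - s))) * fst (w' \<tau>)) / 2) \<longlongrightarrow> 0) (at s)"
    by (rule tendsto_eq_rhs) simp
  moreover have "\<forall>\<^sub>F \<tau> in at s. Im (cnj (fst ((w \<tau> - w s) /\<^sub>R (\<tau> - s))) * fst (w' \<tau>)) / 2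
      = snd (w' \<tau>) / (\<tau> - s)"
    using eventually_at_in_open[OF \<open>open I\<close> \<open>s \<in> I\<close>]
  proof eventually_elim
    case (elim \<tau>)
    have "fst ((w \<tau> - w s) /\<^sub>R (\<tau> - s)) = fst (w \<tau>) / complex_of_real (\<tau> - s)"
      by (simp add: ws scaleR_conv_of_real divide_inverse mult.commute)
    then have "Im (cnj (fst ((w \<tau> - w s) /\<^sub>R (\<tau> - s))) * fst (w' \<tau>)) / 2
        = Im (cnj (fst (w \<tau>)) * fst (w' \<tau>)) / (2 * (\<tau> - s))"
      by (simp add: complex_cnj_divide Im_divide_of_real)
    also have "Im (cnj (fst (w \<tau>)) * fst (w' \<tau>)) = 2 * snd (w' \<tau>)"
      using hor[of \<tau>] elim by (simp add: horizontal_def)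
    also have "2 * snd (w' \<tau>) / (2 * (\<tau> - s)) = snd (w' \<tau>) / (\<tau> - s)"
      by (rule mult_divide_mult_cancel_left) simp
    finally show ?case .
  qed
  ultimately show ?thesis
    by (rule Lim_transform_eventually)
qed

lemma legendrian_C1_snd_div_square_tendsto_0:
  assumes leg: "legendrian_C1 I w w'" and "s \<in> I" and ws: "w s = (0, 0)"
  shows "((\<lambda>\<tau>. snd (w \<tau>) / (\<tau> - s)\<^sup>2) \<longlongrightarrow> 0) (at s)"
proof -
  from leg have "open I" and der: "\<And>\<tau>. \<tau> \<in> I \<Longrightarrow> (w has_vector_derivative w' \<tau>) (at \<tau>)"
    unfolding legendrian_C1_def by auto
  have "((\<lambda>\<tau>. snd (w' \<tau>) / (\<tau> - s) / 2) \<longlongrightarrow> 0) (at s)"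
    using tendsto_divide_zero[OF legendrian_C1_snd_deriv_div_tendsto_0[OF assms]] .
  then have ratio: "((\<lambda>\<tau>. snd (w' \<tau>) / (2 * (\<tau> - s))) \<longlongrightarrow> 0) (at s)"
    by (simp add: mult.commute)
  show ?thesis
  proof (rule lhopital[OF _ _ _ _ _ _ ratio])
    show "((\<lambda>\<tau>. snd (w \<tau>)) \<longlongrightarrow> 0) (at s)"
      using tendsto_snd[OF has_vector_derivative_continuous[OF der[OF \<open>s \<in> I\<close>],
          unfolded isCont_def]] ws by simp
    show "((\<lambda>\<tau>. (\<tau> - s)\<^sup>2) \<longlongrightarrow> 0) (at s)"
      by (auto intro!: tendsto_eq_intros)
    show "\<forall>\<^sub>F \<tau> in at s. (\<tau> - s)\<^sup>2 \<noteq> 0" "\<forall>\<^sub>F \<tau> in at s. 2 * (\<tau> - s) \<noteq> 0"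
      by (simp_all add: eventually_at_filter)
    show "\<forall>\<^sub>F \<tau> in at s. ((\<lambda>\<tau>. (\<tau> - s)\<^sup>2) has_real_derivative 2 * (\<tau> - s)) (at \<tau>)"
      by (auto intro!: always_eventually derivative_eq_intros)
    show "\<forall>\<^sub>F \<tau> in at s. ((\<lambda>\<tau>. snd (w \<tau>)) has_real_derivative snd (w' \<tau>)) (at \<tau>)"
      using eventually_at_in_open'[OF \<open>open I\<close> \<open>s \<in> I\<close>]
      by eventually_elim
        (simp add: has_real_derivative_iff_has_vector_derivative
          bounded_linear.has_vector_derivative[OF bounded_linear_snd der])
  qed
qed

lemma legendrian_C1_heisA_div_square_tendsto:
  assumes leg: "legendrian_C1 I \<gamma> \<gamma>'" and "s \<in> I"
  shows "((\<lambda>\<tau>. heisA (heis_mult (heis_inv (\<gamma> \<tau>)) (\<gamma> s)) / complex_of_real ((\<tau> - s)\<^sup>2))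
           \<longlongrightarrow> complex_of_real ((hnorm (\<gamma>' s))\<^sup>2)) (at s)"
proof -
  define w where "w \<tau> = heis_mult (heis_inv (\<gamma> s)) (\<gamma> \<tau>)" for \<tau>
  have "legendrian_C1 I w (\<lambda>\<tau>. heis_dL (heis_inv (\<gamma> s)) (\<gamma>' \<tau>))"
    unfolding w_def using leg by (rule legendrian_C1_heis_mult)
  then have vertical: "((\<lambda>\<tau>. snd (w \<tau>) / (\<tau> - s)\<^sup>2) \<longlongrightarrow> 0) (at s)"
    using \<open>s \<in> I\<close> by (rule legendrian_C1_snd_div_square_tendsto_0) (simp add: w_def heis_mult_inv_self)
  have "(\<gamma> has_vector_derivative \<gamma>' s) (at s)"
    using leg \<open>s \<in> I\<close> unfolding legendrian_C1_def by blast
  then have "((\<lambda>\<tau>. (\<gamma> \<tau> - \<gamma> s) /\<^sub>R (\<tau> - s)) \<longlongrightarrow> \<gamma>' s) (at s)"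
    by (simp only: has_vector_derivative_iff_difference_quotient)
  then have "((\<lambda>\<tau>. fst ((\<gamma> \<tau> - \<gamma> s) /\<^sub>R (\<tau> - s))) \<longlongrightarrow> fst (\<gamma>' s)) (at s)"
    by (rule tendsto_fst)
  moreover have "fst ((\<gamma> \<tau> - \<gamma> s) /\<^sub>R (\<tau> - s)) = fst (w \<tau>) / complex_of_real (\<tau> - s)" for \<tau>
  proof -
    have "fst (w \<tau>) = fst (\<gamma> \<tau>) - fst (\<gamma> s)"
      by (simp add: w_def heis_mult_def heis_inv_def)
    then show ?thesis
      by (simp add: scaleR_conv_of_real divide_inverse mult.commute)
  qed
  ultimately have horizontal: "((\<lambda>\<tau>. fst (w \<tau>) / complex_of_real (\<tau> - s)) \<longlongrightarrow> fst (\<gamma>' s)) (at s)"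
    by simp
  have "heisA (heis_mult (heis_inv (\<gamma> \<tau>)) (\<gamma> s)) / complex_of_real ((\<tau> - s)\<^sup>2)
      = complex_of_real ((cmod (fst (w \<tau>) / complex_of_real (\<tau> - s)))\<^sup>2)
        + 4 * \<i> * complex_of_real (snd (w \<tau>) / (\<tau> - s)\<^sup>2)" for \<tau>
  proof -
    have "heis_mult (heis_inv (\<gamma> \<tau>)) (\<gamma> s) = heis_inv (w \<tau>)"
      by (simp add: w_def heis_inv_mult_inv)
    then show ?thesis
      by (simp add: heisA_heis_inv complex_eq_iff Re_heisA Im_heisA norm_divide power_divide
          flip: of_real_diff)
  qed
  moreover have "((\<lambda>\<tau>. complex_of_real ((cmod (fst (w \<tau>) / complex_of_real (\<tau> - s)))\<^sup>2)
        + 4 * \<i> * complex_of_real (snd (w \<tau>) / (\<tau> - s)\<^sup>2))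
      \<longlongrightarrow> complex_of_real ((cmod (fst (\<gamma>' s)))\<^sup>2) + 4 * \<i> * complex_of_real 0) (at s)"
    by (intro tendsto_intros horizontal vertical)
  ultimately show ?thesis
    by (simp add: hnorm_def)
qed

theorem proposition6p1:
  fixes I :: "real set" and \<gamma> \<gamma>' :: "real \<Rightarrow> complex \<times> real" and s t :: real
  assumes "legendrian_C1 I \<gamma> \<gamma>'"
    and "s \<in> I" and "t \<in> I" and "s \<noteq> t"
    and "\<gamma> s \<noteq> \<gamma> t"
  shows "((\<lambda>(ds, dt). cross_ratio (\<gamma> s) (\<gamma> t) (\<gamma> (s + ds)) (\<gamma> (t + dt))
              / complex_of_real (ds\<^sup>2 * dt\<^sup>2))
          \<longlongrightarrow> complex_of_real
                ((hnorm (\<gamma>' s) * hnorm (\<gamma>' t) / (koranyi (heis_mult (heis_inv (\<gamma> s)) (\<gamma> t)))\<^sup>2)\<^sup>2))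
         (at (0, 0) within {(ds, dt). ds \<noteq> 0 \<and> dt \<noteq> 0})"
proof -
  let ?F = "at (0::real, 0::real) within {(ds, dt). ds \<noteq> 0 \<and> dt \<noteq> 0}"
  let ?A = "\<lambda>p q. heisA (heis_mult (heis_inv p) q)"
  have "filterlim fst (at 0) ?F" "filterlim snd (at 0) ?F"
    by (auto intro: filterlim_fst_at_within filterlim_snd_at_within)
  note along = filterlim_compose[OF _ this(1)] filterlim_compose[OF _ this(2)]
  have tangent: "((\<lambda>h. ?A (\<gamma> (r + h)) (\<gamma> r) / complex_of_real (h\<^sup>2))
      \<longlongrightarrow> complex_of_real ((hnorm (\<gamma>' r))\<^sup>2)) (at 0)" if "r \<in> I" for r
    using LIM_offset_zero[OF legendrian_C1_heisA_div_square_tendsto[OF assms(1) that]] by simp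
  have curve: "((\<lambda>h. \<gamma> (r + h)) \<longlongrightarrow> \<gamma> r) (at 0)" if "r \<in> I" for r
    using assms(1) that has_vector_derivative_continuous LIM_offset_zero isCont_def
    unfolding legendrian_C1_def by blast
  have chords: "((\<lambda>x. ?A (\<gamma> (t + snd x)) (\<gamma> s) * ?A (\<gamma> (s + fst x)) (\<gamma> t))
      \<longlongrightarrow> complex_of_real (koranyi (heis_mult (heis_inv (\<gamma> s)) (\<gamma> t)) ^ 4)) ?F"
    unfolding heisA_swap_mult_eq_koranyi_pow4[symmetric]
    by (intro tendsto_mult tendsto_heisA_heis_mult_inv along curve assms(2,3))
  have "complex_of_real (koranyi (heis_mult (heis_inv (\<gamma> s)) (\<gamma> t)) ^ 4) \<noteq> 0"
    using assms(5) by (simp add: koranyi_pow4 heisA_eq_0_iff heis_mult_inv_eq_0_iff)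
  from tendsto_divide[OF tendsto_mult[OF along(1)[OF tangent[OF assms(2)]]
      along(2)[OF tangent[OF assms(3)]]] chords this]
  show ?thesis
    unfolding of_real_mult cross_ratio_divide_eq case_prod_beta'
    by (rule tendsto_eq_rhs) (simp add: power_divide power_mult_distrib flip: power_mult)
qed

end
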